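(* Let $0\le \alpha\le 1$ and let $f(z)=z+a_2z^2+a_3z^3+\cdots$ be analytic in $\Delta=\{z\in\mathbb{C}:|z|<1\}$ with $f\in\mathcal{SK}(\alpha)$. Then \[ \mathrm{Re}\left(\frac{f(z)}{z}\right)>\gamma(\alpha):=\frac{2\alpha^2+3\alpha+9}{3(\alpha^2+3\alpha+6)}\qquad(z\in\Delta). \]
   Context: For analytic $F,G$ on $\Delta$, $F\prec G$ ($F$ is subordinate to $G$) means there is an analytic $w:\Delta\to\Delta$ with $w(0)=0$ such that $F(z)=G(w(z))$ for all $z\in\Delta$. For $\alpha\in(-3,1]$ let $\widetilde{q}_\alpha(z)=\dfrac{3}{3+(\alpha-3)z-\alpha z^2}$ ($z\in\Delta$). The class $\mathcal{SK}(\alpha)$ consists of all analytic $f$ on $\Delta$ with $f(0)=0$, $f'(0)=1$, such that $\dfrac{zf'(z)}{f(z)}\prec \widetilde{q}_\alpha(z)$ in $\Delta$. *)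

theory Defs
  imports "HOL-Complex_Analysis.Complex_Analysis"
begin

definition subordinate :: "(complex \<Rightarrow> complex) \<Rightarrow> (complex \<Rightarrow> complex) \<Rightarrow> bool" where
  "subordinate F G \<longleftrightarrow>
     (\<exists>w. w holomorphic_on ball 0 1 \<and> w ` ball 0 1 \<subseteq> ball 0 1 \<and> w 0 = 0 \<and>
          (\<forall>z\<in>ball 0 1. F z = G (w z)))"

definition q_tilde :: "real \<Rightarrow> complex \<Rightarrow> complex" where
  "q_tilde \<alpha> z = 3 / (3 + (of_real \<alpha> - 3) * z - of_real \<alpha> * z ^ 2)"

text \<open>The class SK(alpha), for alpha in (-3,1]. The quotient z f'(z)/f(z) is taken
  with its removable-singularity value 1 at z = 0 (as f(0)=0, f'(0)=1).\<close>
definition SK :: "real \<Rightarrow> (complex \<Rightarrow> complex) set" where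
  "SK \<alpha> = {f. f holomorphic_on ball 0 1 \<and> f 0 = 0 \<and> deriv f 0 = 1 \<and>
              subordinate (\<lambda>z. if z = 0 then 1 else z * deriv f z / f z) (q_tilde \<alpha>)}"

definition gamma_SK :: "real \<Rightarrow> real" where
  "gamma_SK \<alpha> = (2 * \<alpha>^2 + 3 * \<alpha> + 9) / (3 * (\<alpha>^2 + 3 * \<alpha> + 6))"

end

theory Submission
  imports Defs
begin

(* For 0 <= alpha <= 1 the function q_tilde alpha maps the unit disc into the half-plane
   Re w > 1/2, so Re (z f'(z) / f(z)) > 1/2, and gamma_SK alpha <= 1/2.  Write
   f(z)/z = 1 / (1 - u(z)) with u(0) = 0.  If |u| reached 1, Jack's lemma would give a point
   z0 with |u(z0)| = 1 and z0 u'(z0) = k u(z0) for some k >= 1, hence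
   Re (z0 f'(z0)/f(z0)) - 1 = Re (z0 u'(z0) / (1 - u(z0))) = -k/2 <= -1/2, a contradiction.
   So |u| < 1, and Re (f(z)/z) = Re (1 / (1 - u(z))) > 1/2. *)

lemma Re_inverse_one_minus:
  fixes x :: complex
  assumes "x \<noteq> 1"
  shows "Re (1 / (1 - x)) = 1/2 + (1 - (norm x)\<^sup>2) / (2 * (norm (1 - x))\<^sup>2)"
proof -
  have N: "(norm (1 - x))\<^sup>2 = 1 - 2 * Re x + (norm x)\<^sup>2"
    by (simp only: cmod_power2) (simp add: power2_eq_square algebra_simps)
  have "(norm (1 - x))\<^sup>2 \<noteq> 0" using assms by simp
  moreover have "Re (1 / (1 - x)) = (1 - Re x) / (norm (1 - x))\<^sup>2"
    by (simp add: Re_divide')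
  ultimately show ?thesis
    unfolding N by (simp add: field_simps)
qed

corollary Re_inverse_one_minus_gt_half:
  fixes x :: complex
  assumes "norm x < 1"
  shows "Re (1 / (1 - x)) > 1/2"
proof -
  have "x \<noteq> 1" using assms by auto
  moreover have "(norm x)\<^sup>2 < 1" using assms by (simp add: power_less_one_iff)
  ultimately show ?thesis by (simp add: Re_inverse_one_minus)
qed

corollary Re_div_one_minus_unimodular:
  fixes a :: complex
  assumes "norm a = 1" and "a \<noteq> 1"
  shows "Re (a / (1 - a)) = -1/2"
proof -
  have "a / (1 - a) = 1 / (1 - a) - 1" using assms(2) by (simp add: field_simps)
  then show ?thesis using assms by (simp add: Re_inverse_one_minus)
qed

lemma Re_q_tilde_gt_half:
  assumes "0 \<le> \<alpha>" and "\<alpha> \<le> 3" and "norm \<omega> < 1"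
  shows "Re (q_tilde \<alpha> \<omega>) > 1/2"
proof -
  define x where "x = \<omega> * (of_real (3 - \<alpha>) + of_real \<alpha> * \<omega>) / 3"
  have "q_tilde \<alpha> \<omega> = 1 / (1 - x)"
    by (simp add: q_tilde_def x_def field_simps power2_eq_square)
  moreover have "norm x < 1"
  proof -
    have "norm (3 - of_real \<alpha> :: complex) = 3 - \<alpha>"
      using assms norm_of_real[of "3 - \<alpha>"] by simp
    then have "norm (of_real (3 - \<alpha>) + of_real \<alpha> * \<omega>) \<le> (3 - \<alpha>) + \<alpha> * norm \<omega>"
      using norm_triangle_ineq[of "3 - of_real \<alpha>" "of_real \<alpha> * \<omega>"] assms
      by (simp add: norm_mult)
    also have "\<dots> \<le> 3" using assms by (simp add: mult_left_le)
    finally have "norm x \<le> norm \<omega>"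
      by (simp add: x_def norm_mult norm_divide mult_left_mono)
    with assms(3) show ?thesis by simp
  qed
  ultimately show ?thesis by (metis Re_inverse_one_minus_gt_half)
qed

lemma gamma_SK_le_half:
  assumes "0 \<le> \<alpha>" and "\<alpha> \<le> 3"
  shows "gamma_SK \<alpha> \<le> 1/2"
proof -
  have "\<alpha>\<^sup>2 \<le> 3 * \<alpha>" using assms by (simp add: power2_eq_square mult_right_mono)
  moreover have "\<alpha>\<^sup>2 + 3 * \<alpha> + 6 > 0" using assms by (simp add: add_nonneg_pos)
  ultimately show ?thesis by (simp add: gamma_SK_def field_simps)
qed

lemma subordinate_Re_gt:
  assumes "subordinate F G" and "\<And>\<omega>. \<omega> \<in> ball 0 1 \<Longrightarrow> Re (G \<omega>) > c" and "z \<in> ball 0 1"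
  shows "Re (F z) > c"
  using assms unfolding subordinate_def by (metis image_subset_iff)

lemma Schwarz_Lemma_radius:
  assumes holu: "u holomorphic_on ball 0 r" and u0: "u 0 = 0"
    and bounded: "\<And>z. norm z < r \<Longrightarrow> norm (u z) < 1" and z: "norm z < r"
  shows "norm (u z) \<le> norm z / r"
proof -
  have r: "r > 0" using z by (meson norm_ge_zero le_less_trans)
  define v where "v = (\<lambda>\<zeta>. u (of_real r * \<zeta>))"
  have "norm (of_real r * \<zeta>) < r" if "norm \<zeta> < 1" for \<zeta> :: complex
    using r that by (simp add: norm_mult)
  then have img: "(\<lambda>\<zeta>::complex. of_real r * \<zeta>) ` ball 0 1 \<subseteq> ball 0 r" by auto
  have "v holomorphic_on ball 0 1"
    unfolding v_def
    by (rule holomorphic_on_compose_gen[OF _ holu img, unfolded o_def]) (intro holomorphic_intros)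
  moreover have "v 0 = 0" "\<And>\<zeta>. norm \<zeta> < 1 \<Longrightarrow> norm (v \<zeta>) < 1"
    using u0 r by (auto simp: v_def norm_mult intro!: bounded)
  moreover have "norm (z / of_real r) < 1" using z r by (simp add: norm_divide)
  ultimately have "norm (v (z / of_real r)) \<le> norm (z / of_real r)"
    by (rule Schwarz_Lemma(1))
  then show ?thesis using r by (simp add: v_def norm_divide)
qed

lemma ex_real_ge_one_if_Re_mult_ge:
  fixes c :: complex
  assumes "\<And>e. 0 < Re e \<Longrightarrow> Re e \<le> Re (c * e)"
  shows "\<exists>k\<ge>1. c = of_real k"
proof (rule ccontr)
  assume not_real_ge_one: "\<not> ?thesis"
  define w where "w = 1 - c"
  have "w \<noteq> 0" using not_real_ge_one by (auto simp: w_def)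
  have "Re w > - norm w"
  proof -
    have "Re w \<noteq> - norm w"
    proof
      assume "Re w = - norm w"
      then have "Im w = 0" using cmod_power2[of w] by (simp add: power2_eq_square)
      with \<open>Re w = - norm w\<close> show False
        using not_real_ge_one by (auto simp: w_def cmod_def complex_eq_iff intro!: exI[of _ "Re c"])
    qed
    with abs_Re_le_cmod[of w] show ?thesis by linarith
  qed
  define e where "e = 1 + cnj w / norm w"
  have "w * e = w + norm w"
    using \<open>w \<noteq> 0\<close> by (simp add: e_def field_simps complex_norm_square[symmetric] power2_eq_square)
  then have "Re (w * e) > 0" using \<open>Re w > - norm w\<close> by simp
  moreover have "0 < Re e"
    using \<open>Re w > - norm w\<close> \<open>w \<noteq> 0\<close> by (simp add: e_def field_simps)
  ultimately show False using assms[of e] by (simp add: w_def left_diff_distrib)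
qed

lemma Jack_boundary_directional:
  assumes holu: "u holomorphic_on S" "open S" "z0 \<in> S"
    and unimodular: "norm (u z0) = 1" and "z0 \<noteq> 0"
    and below: "\<And>z. norm z < norm z0 \<Longrightarrow> norm (u z) \<le> norm z / norm z0"
    and Re_e: "0 < Re e"
  shows "Re e \<le> Re (z0 * deriv u z0 / u z0 * e)"
proof (rule ccontr)
  define a where "a = u z0"
  define c where "c = z0 * deriv u z0 / a"
  assume "\<not> Re e \<le> Re (z0 * deriv u z0 / u z0 * e)"
  then have Re_ce: "Re (c * e) < Re e" by (simp add: c_def a_def)
  have "a \<noteq> 0" using unimodular by (auto simp: a_def)
  have cnj_a: "cnj a * a = 1"
    using unimodular complex_norm_square[of a] by (simp add: a_def mult.commute)
  (* Along the path z0 * exp (- s * e), which enters the disc of radius norm z0, psi starts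
     at 0 with positive slope, while the Schwarz bound keeps it non-positive. *)
  define g where "g = (\<lambda>t. cnj a * u (z0 * exp (- (t * e))))"
  define \<psi> where "\<psi> = (\<lambda>s::real. Re (g (of_real s)) - exp (- (s * Re e)))"
  have "(u has_field_derivative deriv u z0) (at z0)"
    using holomorphic_derivI[OF holu] .
  then have "(g has_field_derivative - (c * e)) (at (of_real 0))"
    using cnj_a \<open>a \<noteq> 0\<close> unfolding g_def
    by (auto intro!: derivative_eq_intros DERIV_chain2[of u] simp: c_def field_simps)
  then have "((\<lambda>s. Re (g (of_real s))) has_field_derivative - Re (c * e)) (at 0)"
    using has_field_derivative_Re[OF has_vector_derivative_real_field] by fastforce
  moreover have "((\<lambda>s. exp (- (s * Re e))) has_real_derivative - Re e) (at 0)"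
    by (auto intro!: derivative_eq_intros)
  ultimately have "(\<psi> has_real_derivative - Re (c * e) - - Re e) (at 0)"
    unfolding \<psi>_def by (rule DERIV_diff)
  moreover have "0 < - Re (c * e) - - Re e" using Re_ce by simp
  ultimately obtain d where "d > 0" and increasing: "\<forall>s>0. s < d \<longrightarrow> \<psi> 0 < \<psi> (0 + s)"
    by (blast dest: DERIV_pos_inc_right)
  define s where "s = d / 2"
  have "0 < s" "s < d" using \<open>d > 0\<close> by (auto simp: s_def)
  define z where "z = z0 * exp (- (of_real s * e))"
  have norm_z: "norm z = norm z0 * exp (- (s * Re e))"
    by (simp add: z_def norm_mult)
  have "exp (- (s * Re e)) < 1" using \<open>0 < s\<close> Re_e by simp
  then have "norm z < norm z0" using norm_z \<open>z0 \<noteq> 0\<close> by simp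
  have "Re (cnj a * u z) \<le> norm (u z)"
    using complex_Re_le_cmod[of "cnj a * u z"] unimodular by (simp add: a_def norm_mult)
  also have "\<dots> \<le> exp (- (s * Re e))"
    using below[OF \<open>norm z < norm z0\<close>] norm_z \<open>z0 \<noteq> 0\<close> by simp
  finally have "\<psi> s \<le> 0" by (simp add: \<psi>_def g_def z_def)
  moreover have "\<psi> 0 = 0"
    using arg_cong[OF cnj_a, of Re] by (simp add: \<psi>_def g_def a_def[symmetric])
  ultimately show False using increasing \<open>0 < s\<close> \<open>s < d\<close> by auto
qed

lemma Jack_boundary:
  assumes "u holomorphic_on S" "open S" "z0 \<in> S"
    and unimodular: "norm (u z0) = 1" and "z0 \<noteq> 0"
    and "\<And>z. norm z < norm z0 \<Longrightarrow> norm (u z) \<le> norm z / norm z0"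
  obtains k :: real where "1 \<le> k" and "z0 * deriv u z0 = of_real k * u z0"
proof -
  obtain k where "1 \<le> k" and "z0 * deriv u z0 / u z0 = of_real k"
    using ex_real_ge_one_if_Re_mult_ge Jack_boundary_directional[OF assms] by blast
  moreover have "u z0 \<noteq> 0" using unimodular by auto
  ultimately show ?thesis using that by (simp add: divide_eq_eq)
qed

lemma Jack_lemma:
  assumes holu: "u holomorphic_on ball 0 1" and u0: "u 0 = 0"
    and z1: "z1 \<in> ball 0 1" and "1 \<le> norm (u z1)"
  obtains z0 k where "z0 \<in> ball 0 1" and "z0 \<noteq> 0" and "norm (u z0) = 1"
    and "1 \<le> k" and "z0 * deriv u z0 = of_real k * u z0"
proof -
  define R where "R = norm z1"
  have "R < 1" using z1 by (simp add: R_def)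
  then have "cball 0 R \<subseteq> ball 0 1" by auto
  then have cont: "continuous_on (cball 0 R) (\<lambda>z. norm (u z))"
    using holomorphic_on_imp_continuous_on[OF holu]
    by (intro continuous_intros) (rule continuous_on_subset)
  define S where "S = cball 0 R \<inter> (\<lambda>z. norm (u z)) -` {1..}"
  have "compact S"
    unfolding S_def compact_eq_bounded_closed
    by (auto intro: continuous_closed_preimage[OF cont] bounded_subset[of "cball 0 R"])
  moreover have "z1 \<in> S" using \<open>1 \<le> norm (u z1)\<close> by (simp add: S_def R_def)
  ultimately obtain z0 where "z0 \<in> S" and minimal: "\<And>z. z \<in> S \<Longrightarrow> norm z0 \<le> norm z"
    using continuous_attains_inf[of S norm] continuous_on_norm_id by blast
  define r where "r = norm z0"
  have "r \<le> R" "1 \<le> norm (u z0)" using \<open>z0 \<in> S\<close> by (auto simp: S_def r_def)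
  have inside: "norm (u z) < 1" if "norm z < r" for z
    using minimal[of z] that \<open>r \<le> R\<close> by (force simp: S_def r_def)
  have "z0 \<noteq> 0" using \<open>1 \<le> norm (u z0)\<close> u0 by auto
  have "z0 \<in> ball 0 1" using \<open>r \<le> R\<close> \<open>R < 1\<close> by (simp add: r_def)
  have "closure (ball 0 r) \<subseteq> cball 0 R \<inter> (\<lambda>z. norm (u z)) -` {..1}"
    using inside \<open>r \<le> R\<close>
    by (intro closure_minimal continuous_closed_preimage[OF cont]) (auto simp: less_imp_le)
  then have "norm (u z0) = 1"
    using \<open>1 \<le> norm (u z0)\<close> \<open>z0 \<noteq> 0\<close> by (auto simp: r_def)
  moreover have "u holomorphic_on ball 0 r"
    by (rule holomorphic_on_subset[OF holu]) (use \<open>r \<le> R\<close> \<open>R < 1\<close> in auto)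
  then have "norm (u z) \<le> norm z / norm z0" if "norm z < norm z0" for z
    using Schwarz_Lemma_radius[of u r z] u0 inside that by (simp add: r_def)
  ultimately obtain k where "1 \<le> k" "z0 * deriv u z0 = of_real k * u z0"
    using Jack_boundary[OF holu open_ball \<open>z0 \<in> ball 0 1\<close>] \<open>z0 \<noteq> 0\<close> by blast
  then show ?thesis
    using that \<open>z0 \<in> ball 0 1\<close> \<open>z0 \<noteq> 0\<close> \<open>norm (u z0) = 1\<close> by blast
qed

lemma Re_div_gt_half_if_Re_logderiv_gt_half:
  assumes holf: "f holomorphic_on ball 0 1" and f0: "f 0 = 0" and df0: "deriv f 0 = 1"
    and logderiv_gt: "\<And>z. z \<in> ball 0 1 \<Longrightarrow> z \<noteq> 0 \<Longrightarrow> Re (z * deriv f z / f z) > 1/2"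
    and z: "z \<in> ball 0 1" "z \<noteq> 0"
  shows "Re (f z / z) > 1/2"
proof -
  obtain h where holh: "h holomorphic_on ball 0 1" and f_eq: "\<And>z. norm z < 1 \<Longrightarrow> f z = z * h z"
    and "deriv f 0 = h 0"
    using Schwarz3[OF holf f0] by blast
  (* f w = 0 would make the quotient in logderiv_gt equal to 0 *)
  have f_nonzero: "f w \<noteq> 0" if "w \<in> ball 0 1" "w \<noteq> 0" for w
    using logderiv_gt[OF that] by auto
  have h_nonzero: "h w \<noteq> 0" if "w \<in> ball 0 1" for w
    using f_nonzero[OF that] f_eq that df0 \<open>deriv f 0 = h 0\<close> by (cases "w = 0") auto
  define u where "u = (\<lambda>w. 1 - 1 / h w)"
  have holu: "u holomorphic_on ball 0 1"
    unfolding u_def using holh h_nonzero by (intro holomorphic_intros) auto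
  have u0: "u 0 = 0" using df0 \<open>deriv f 0 = h 0\<close> by (simp add: u_def)
  have one_minus_u: "1 - u w = w / f w" if "w \<in> ball 0 1" "w \<noteq> 0" for w
    using f_eq[of w] that h_nonzero[OF that(1)] by (simp add: u_def)
  have u_logderiv: "w * deriv u w / (1 - u w) = w * deriv f w / f w - 1"
    if w: "w \<in> ball 0 1" "w \<noteq> 0" for w
  proof -
    have "(f has_field_derivative deriv f w) (at w)"
      using holomorphic_derivI[OF holf open_ball w(1)] .
    then have "((\<lambda>w. 1 - w / f w) has_field_derivative (w * deriv f w - f w) / (f w)\<^sup>2) (at w)"
      using f_nonzero[OF w] by (auto intro!: derivative_eq_intros simp: field_simps power2_eq_square)
    then have "(u has_field_derivative (w * deriv f w - f w) / (f w)\<^sup>2) (at w)"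
      by (rule has_field_derivative_transform_within_open[of _ _ _ "ball 0 1 - {0}"])
         (use w one_minus_u in \<open>auto simp: algebra_simps\<close>)
    then have "deriv u w = (w * deriv f w - f w) / (f w)\<^sup>2"
      by (rule DERIV_imp_deriv)
    then show ?thesis
      unfolding one_minus_u[OF w] using f_nonzero[OF w] w(2)
      by (simp add: field_simps power2_eq_square)
  qed
  have "norm (u z) < 1"
  proof (rule ccontr)
    assume "\<not> norm (u z) < 1"
    then have "1 \<le> norm (u z)" by simp
    then obtain z0 k where z0: "z0 \<in> ball 0 1" "z0 \<noteq> 0" and "norm (u z0) = 1"
      and "1 \<le> k" and jack: "z0 * deriv u z0 = of_real k * u z0"
      by (rule Jack_lemma[OF holu u0 z(1)])
    have "u z0 \<noteq> 1" using one_minus_u[OF z0] f_nonzero[OF z0] z0(2) by auto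
    have "z0 * deriv u z0 / (1 - u z0) = k *\<^sub>R (u z0 / (1 - u z0))"
      by (simp add: jack scaleR_conv_of_real)
    then have "Re (z0 * deriv u z0 / (1 - u z0)) = k * Re (u z0 / (1 - u z0))"
      by simp
    also have "\<dots> = - k / 2"
      using Re_div_one_minus_unimodular[OF \<open>norm (u z0) = 1\<close> \<open>u z0 \<noteq> 1\<close>] by simp
    finally show False
      using logderiv_gt[OF z0] u_logderiv[OF z0] \<open>1 \<le> k\<close> by simp
  qed
  moreover have "f z / z = 1 / (1 - u z)"
    using one_minus_u[OF z] by simp
  ultimately show ?thesis by (metis Re_inverse_one_minus_gt_half)
qed

theorem theorem2p1:
  fixes \<alpha> :: real and f :: "complex \<Rightarrow> complex" and z :: complex
  assumes "0 \<le> \<alpha>" and "\<alpha> \<le> 1"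
    and "f \<in> SK \<alpha>"
    and "z \<in> ball 0 1"
  shows "Re (if z = 0 then 1 else f z / z) > gamma_SK \<alpha>"
proof -
  have holf: "f holomorphic_on ball 0 1" and "f 0 = 0" and "deriv f 0 = 1"
    and sub: "subordinate (\<lambda>z. if z = 0 then 1 else z * deriv f z / f z) (q_tilde \<alpha>)"
    using assms(3) by (auto simp: SK_def)
  have "Re (z * deriv f z / f z) > 1/2" if "z \<in> ball 0 1" "z \<noteq> 0" for z
    using subordinate_Re_gt[OF sub _ that(1), of "1/2"] Re_q_tilde_gt_half[of \<alpha>] assms(1,2) that(2)
    by simp
  then have "Re (if z = 0 then 1 else f z / z) > 1/2"
    using Re_div_gt_half_if_Re_logderiv_gt_half[OF holf \<open>f 0 = 0\<close> \<open>deriv f 0 = 1\<close>] assms(4)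
    by simp
  moreover have "gamma_SK \<alpha> \<le> 1/2" using assms(1,2) gamma_SK_le_half by simp
  ultimately show ?thesis by linarith
qed

end
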